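(* Let $U,V,W$ be Hermitian spaces with $U$ finite-dimensional, $D\in\mathrm{Hom}(U,V)$ linear, and $\rho:V\times U^*\to W$ bilinear. Then $$\|\mathrm{Tr}_\rho D\|_W\le\sqrt{\mathrm{rank}(D)}\,\|\rho\|\,\|D\|.$$
   Context: $\mathrm{Tr}_\rho D=\sum_i\rho(Du_i,u^i)\in W$ for a basis $\{u_i\}$ of $U$ with dual basis $\{u^i\}$ of $U^*$ (independent of the basis). $U^*$ carries the dual Hermitian structure. $\|\rho\|=\sup\{\|\rho(v,\alpha)\|_W:\|v\|_V=1,\|\alpha\|_{U^*}=1\}$, and $\|D\|=\big(\sum_i\|Du_i\|_V^2\big)^{1/2}$ for an orthonormal basis $\{u_i\}$ of $U$ (Hilbert–Schmidt norm). *)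

theory Defs
  imports "HOL-Analysis.Analysis" "HOL-Library.Extended_Nonnegative_Real"
begin

class complex_vector = ab_group_add +
  fixes scaleC :: "complex \<Rightarrow> 'a \<Rightarrow> 'a" (infixr "*\<^sub>C" 75)
  assumes scaleC_add_right: "a *\<^sub>C (x + y) = a *\<^sub>C x + a *\<^sub>C y"
    and scaleC_add_left: "(a + b) *\<^sub>C x = a *\<^sub>C x + b *\<^sub>C x"
    and scaleC_scaleC: "a *\<^sub>C (b *\<^sub>C x) = (a * b) *\<^sub>C x"
    and scaleC_one: "1 *\<^sub>C x = x"

class hermitian_space = complex_vector +
  fixes cinner :: "'a \<Rightarrow> 'a \<Rightarrow> complex"
    and hnorm :: "'a \<Rightarrow> real"
  assumes cinner_conj_sym: "cinner x y = cnj (cinner y x)"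
    and cinner_add_left: "cinner (x + y) z = cinner x z + cinner y z"
    and cinner_scaleC_left: "cinner (a *\<^sub>C x) y = a * cinner x y"
    and cinner_pos: "x \<noteq> 0 \<Longrightarrow> Re (cinner x x) > 0"
    and norm_cinner: "hnorm x = sqrt (Re (cinner x x))"

definition clinear :: "('a::complex_vector \<Rightarrow> 'b::complex_vector) \<Rightarrow> bool" where
  "clinear f \<longleftrightarrow> (\<forall>x y. f (x + y) = f x + f y) \<and> (\<forall>a x. f (a *\<^sub>C x) = a *\<^sub>C f x)"

definition cfunctional :: "('a::complex_vector \<Rightarrow> complex) \<Rightarrow> bool" where
  "cfunctional f \<longleftrightarrow> (\<forall>x y. f (x + y) = f x + f y) \<and> (\<forall>a x. f (a *\<^sub>C x) = a * f x)"

definition cspan :: "'a::complex_vector set \<Rightarrow> 'a set" where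
  "cspan S = {x. \<exists>F c. finite F \<and> F \<subseteq> S \<and> x = (\<Sum>v\<in>F. c v *\<^sub>C v)}"

definition cindependent :: "'a::complex_vector set \<Rightarrow> bool" where
  "cindependent S \<longleftrightarrow> (\<forall>F c. finite F \<and> F \<subseteq> S \<and> (\<Sum>v\<in>F. c v *\<^sub>C v) = 0 \<longrightarrow> (\<forall>v\<in>F. c v = 0))"

definition cfinite_dim :: "'a::complex_vector set \<Rightarrow> bool" where
  "cfinite_dim S \<longleftrightarrow> (\<exists>F. finite F \<and> S \<subseteq> cspan F)"

definition cbasis :: "'a::complex_vector set \<Rightarrow> bool" where
  "cbasis B \<longleftrightarrow> finite B \<and> cindependent B \<and> cspan B = UNIV"

definition cdim :: "'a::complex_vector set \<Rightarrow> nat" where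
  "cdim S = (LEAST n. \<exists>F. finite F \<and> card F = n \<and> S \<subseteq> cspan F)"

definition crank :: "('a::complex_vector \<Rightarrow> 'b::complex_vector) \<Rightarrow> nat" where
  "crank D = cdim (range D)"

text \<open>Dual basis element: the coordinate functional of b w.r.t. the basis B.\<close>
definition dual_elem :: "'a::complex_vector set \<Rightarrow> 'a \<Rightarrow> ('a \<Rightarrow> complex)" where
  "dual_elem B b = (\<lambda>x. (THE c. c \<in> B \<rightarrow>\<^sub>E UNIV \<and> x = (\<Sum>v\<in>B. c v *\<^sub>C v)) b)"

text \<open>\<open>Tr_\<rho> D = \<Sum>_i \<rho>(D u_i, u^i)\<close> for some (any) basis.\<close>
definition rho_trace :: "('v \<Rightarrow> ('u::complex_vector \<Rightarrow> complex) \<Rightarrow> 'w::complex_vector)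
    \<Rightarrow> ('u \<Rightarrow> 'v) \<Rightarrow> 'w" where
  "rho_trace \<rho> D = (let B = SOME B. cbasis B in \<Sum>b\<in>B. \<rho> (D b) (dual_elem B b))"

definition corthonormal_basis :: "'a::hermitian_space set \<Rightarrow> bool" where
  "corthonormal_basis B \<longleftrightarrow> finite B \<and> cspan B = UNIV \<and>
     (\<forall>b\<in>B. \<forall>b'\<in>B. cinner b b' = (if b = b' then 1 else 0))"

text \<open>Hilbert--Schmidt norm, via some (any) orthonormal basis of U.\<close>
definition hs_norm :: "('u::hermitian_space \<Rightarrow> 'v::hermitian_space) \<Rightarrow> real" where
  "hs_norm D = (let B = SOME B. corthonormal_basis B in sqrt (\<Sum>b\<in>B. (hnorm (D b))\<^sup>2))"

definition dual_norm :: "('u::hermitian_space \<Rightarrow> complex) \<Rightarrow> ennreal" where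
  "dual_norm \<alpha> = (SUP u\<in>{u. hnorm u = 1}. ennreal (cmod (\<alpha> u)))"

definition cbilinear :: "('v::complex_vector \<Rightarrow> ('u::complex_vector \<Rightarrow> complex) \<Rightarrow> 'w::complex_vector) \<Rightarrow> bool" where
  "cbilinear \<rho> \<longleftrightarrow>
     (\<forall>\<alpha>. cfunctional \<alpha> \<longrightarrow> clinear (\<lambda>v. \<rho> v \<alpha>)) \<and>
     (\<forall>v \<alpha> \<beta>. cfunctional \<alpha> \<and> cfunctional \<beta> \<longrightarrow> \<rho> v (\<lambda>x. \<alpha> x + \<beta> x) = \<rho> v \<alpha> + \<rho> v \<beta>) \<and>
     (\<forall>v a \<alpha>. cfunctional \<alpha> \<longrightarrow> \<rho> v (\<lambda>x. a * \<alpha> x) = a *\<^sub>C \<rho> v \<alpha>)"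

text \<open>\<open>\<parallel>\<rho>\<parallel>\<close> as an extended nonnegative real (may be infinite if V is infinite-dimensional).\<close>
definition rho_norm :: "('v::hermitian_space \<Rightarrow> ('u::hermitian_space \<Rightarrow> complex) \<Rightarrow> 'w::hermitian_space) \<Rightarrow> ennreal" where
  "rho_norm \<rho> = (SUP p\<in>{(v, \<alpha>). hnorm v = 1 \<and> cfunctional \<alpha> \<and> dual_norm \<alpha> = 1}.
                    ennreal (hnorm (\<rho> (fst p) (snd p))))"

end

theory Submission
  imports Defs
begin

text \<open>Let \<open>E\<close> be an orthonormal basis of the range of \<open>D\<close>, so \<open>card E \<le> rank D\<close>.
  Bilinearity gives \<open>Tr\<^sub>\<rho> D = (\<Sum>e\<in>E. \<rho> e \<psi>\<^sub>e)\<close> with \<open>\<psi>\<^sub>e = \<langle>D \<cdot>, e\<rangle>\<close>, hence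
  \<open>\<parallel>Tr\<^sub>\<rho> D\<parallel> \<le> \<parallel>\<rho>\<parallel> (\<Sum>e\<in>E. \<parallel>\<psi>\<^sub>e\<parallel>)\<close>. Cauchy--Schwarz in an orthonormal basis \<open>Q\<close> of \<open>U\<close>
  bounds \<open>\<parallel>\<psi>\<^sub>e\<parallel>\<close> by \<open>s\<^sub>e = sqrt (\<Sum>q\<in>Q. \<bar>\<langle>D q, e\<rangle>\<bar>\<^sup>2)\<close>, and Cauchy--Schwarz over \<open>E\<close> gives
  \<open>(\<Sum>e\<in>E. s\<^sub>e) \<le> sqrt (card E) \<cdot> sqrt (\<Sum>e\<in>E. s\<^sub>e\<^sup>2)\<close>, where
  \<open>(\<Sum>e\<in>E. s\<^sub>e\<^sup>2) = (\<Sum>q\<in>Q. \<parallel>D q\<parallel>\<^sup>2) = \<parallel>D\<parallel>\<^sup>2\<close> by Parseval.\<close>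

interpretation cv: module "scaleC :: complex \<Rightarrow> 'a \<Rightarrow> 'a::complex_vector"
  by standard (simp_all add: scaleC_add_right scaleC_add_left scaleC_scaleC scaleC_one)

lemma cspan_eq_span: "cspan S = cv.span S"
  unfolding cspan_def cv.span_explicit by auto

lemma cindependent_iff: "cindependent S \<longleftrightarrow> \<not> cv.dependent S"
  unfolding cindependent_def cv.dependent_explicit by blast

lemma cinner_zero_left [simp]: "cinner 0 y = 0"
  using cinner_add_left[of 0 0 y] by simp

lemma cinner_zero_right [simp]: "cinner x 0 = 0"
  using cinner_conj_sym[of x 0] by simp

lemma cinner_add_right: "cinner x (y + z) = cinner x y + cinner x z"
  by (metis cinner_add_left cinner_conj_sym complex_cnj_add)

lemma cinner_scaleC_right: "cinner x (a *\<^sub>C y) = cnj a * cinner x y"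
  by (metis cinner_conj_sym cinner_scaleC_left complex_cnj_mult)

lemma cinner_minus_left: "cinner (- x) y = - cinner x y"
  using cinner_add_left[of x "-x" y] by (simp add: eq_neg_iff_add_eq_0 add.commute)

lemma cinner_diff_left: "cinner (x - y) z = cinner x z - cinner y z"
  using cinner_add_left[of x "-y" z] cinner_minus_left[of y z] by simp

lemma cinner_diff_right: "cinner x (y - z) = cinner x y - cinner x z"
  by (metis cinner_conj_sym cinner_diff_left complex_cnj_diff)

lemma cinner_sum_left: "cinner (\<Sum>i\<in>A. f i) y = (\<Sum>i\<in>A. cinner (f i) y)"
  by (induction A rule: infinite_finite_induct) (auto simp: cinner_add_left)

lemma cinner_sum_right: "cinner y (\<Sum>i\<in>A. f i) = (\<Sum>i\<in>A. cinner y (f i))"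
  by (induction A rule: infinite_finite_induct) (auto simp: cinner_add_right)

lemma cinner_self_nonneg: "Re (cinner x x) \<ge> 0"
  by (cases "x = 0") (auto dest: cinner_pos[of x])

lemma cinner_self_eq_hnorm_sq: "cinner x x = complex_of_real ((hnorm x)\<^sup>2)"
proof -
  have "Im (cinner x x) = 0"
    using cinner_conj_sym[of x x] by (metis cnj.sel(2) neg_equal_zero)
  then show ?thesis
    by (simp add: complex_eq_iff norm_cinner cinner_self_nonneg)
qed

lemma hnorm_sq: "(hnorm x)\<^sup>2 = Re (cinner x x)"
  by (simp add: norm_cinner cinner_self_nonneg)

lemma hnorm_nonneg: "hnorm x \<ge> 0"
  by (simp add: norm_cinner cinner_self_nonneg)

lemma hnorm_zero [simp]: "hnorm 0 = 0"
  by (simp add: norm_cinner)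

lemma hnorm_pos: "x \<noteq> 0 \<Longrightarrow> hnorm x > 0"
  by (simp add: norm_cinner cinner_pos)

lemma hnorm_scaleC: "hnorm (a *\<^sub>C x) = cmod a * hnorm x"
proof -
  have "cinner (a *\<^sub>C x) (a *\<^sub>C x) = (a * cnj a) * cinner x x"
    by (simp add: cinner_scaleC_left cinner_scaleC_right mult.assoc)
  then have "Re (cinner (a *\<^sub>C x) (a *\<^sub>C x)) = (cmod a)\<^sup>2 * Re (cinner x x)"
    by (simp add: complex_norm_square[symmetric])
  then show ?thesis
    by (simp add: norm_cinner real_sqrt_mult)
qed

lemma hnorm_normalize: "x \<noteq> 0 \<Longrightarrow> hnorm (complex_of_real (1 / hnorm x) *\<^sub>C x) = 1"
  using hnorm_pos[of x] by (simp add: hnorm_scaleC norm_divide)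

lemma cmod_cinner_le: "cmod (cinner x y) \<le> hnorm x * hnorm y"
proof (cases "y = 0")
  case True
  then show ?thesis by simp
next
  case False
  define r where "r = (hnorm y)\<^sup>2"
  have r: "cinner y y = complex_of_real r" "r > 0"
    using cinner_self_eq_hnorm_sq[of y] hnorm_pos[OF False] by (simp_all add: r_def)
  define t where "t = cinner x y / complex_of_real r"
  \<comment> \<open>\<open>x - t y\<close> is the component of \<open>x\<close> orthogonal to \<open>y\<close>.\<close>
  have "cinner (x - t *\<^sub>C y) (x - t *\<^sub>C y)
      = cinner x x - cinner x y * cnj (cinner x y) / complex_of_real r"
    using r by (simp add: cinner_diff_left cinner_diff_right cinner_scaleC_left
        cinner_scaleC_right t_def cinner_conj_sym[of y x] field_simps)
  also have "\<dots> = cinner x x - complex_of_real ((cmod (cinner x y))\<^sup>2 / r)"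
    using complex_norm_square[of "cinner x y"] by simp
  finally have "(cmod (cinner x y))\<^sup>2 / r \<le> Re (cinner x x)"
    using cinner_self_nonneg[of "x - t *\<^sub>C y"] by simp
  then have "(cmod (cinner x y))\<^sup>2 \<le> (hnorm x * hnorm y)\<^sup>2"
    using r(2) by (simp add: divide_le_eq power_mult_distrib hnorm_sq r_def mult.commute)
  then show ?thesis
    by (rule power2_le_imp_le) (simp add: hnorm_nonneg)
qed

lemma hnorm_triangle: "hnorm (x + y) \<le> hnorm x + hnorm y"
proof -
  have "Re (cinner (x + y) (x + y))
      = Re (cinner x x) + Re (cinner y y) + Re (cinner x y) + Re (cinner y x)"
    by (simp add: cinner_add_left cinner_add_right)
  also have "\<dots> \<le> Re (cinner x x) + Re (cinner y y) + 2 * (hnorm x * hnorm y)"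
    using cmod_cinner_le[of x y] cmod_cinner_le[of y x]
      abs_Re_le_cmod[of "cinner x y"] abs_Re_le_cmod[of "cinner y x"]
    by (simp add: mult.commute)
  finally have "(hnorm (x + y))\<^sup>2 \<le> (hnorm x + hnorm y)\<^sup>2"
    by (simp add: hnorm_sq power2_sum)
  then show ?thesis
    by (rule power2_le_imp_le) (simp add: hnorm_nonneg)
qed

lemma hnorm_sum_le: "hnorm (\<Sum>i\<in>A. f i) \<le> (\<Sum>i\<in>A. hnorm (f i))"
  by (induction A rule: infinite_finite_induct) (auto intro: order_trans[OF hnorm_triangle])

definition orthonormal :: "'a::hermitian_space set \<Rightarrow> bool" where
  "orthonormal E \<longleftrightarrow> (\<forall>e\<in>E. \<forall>e'\<in>E. cinner e e' = (if e = e' then 1 else 0))"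

lemma orthonormal_subset: "orthonormal E \<Longrightarrow> F \<subseteq> E \<Longrightarrow> orthonormal F"
  unfolding orthonormal_def by blast

lemma orthonormal_hnorm: "orthonormal E \<Longrightarrow> e \<in> E \<Longrightarrow> hnorm e = 1"
  unfolding orthonormal_def by (simp add: norm_cinner)

lemma cinner_sum_orthonormal:
  assumes "finite E" "orthonormal E" "e' \<in> E"
  shows "cinner (\<Sum>e\<in>E. u e *\<^sub>C e) e' = u e'"
proof -
  have "cinner (\<Sum>e\<in>E. u e *\<^sub>C e) e' = (\<Sum>e\<in>E. if e = e' then u e else 0)"
    using assms(2,3) unfolding orthonormal_def
    by (auto simp: cinner_sum_left cinner_scaleC_left intro: sum.cong)
  also have "\<dots> = u e'"
    using assms(1,3) by simp
  finally show ?thesis .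
qed

lemma orthonormal_expansion:
  assumes "finite E" "orthonormal E" "v \<in> cv.span E"
  shows "v = (\<Sum>e\<in>E. cinner v e *\<^sub>C e)"
proof -
  obtain u where u: "v = (\<Sum>e\<in>E. u e *\<^sub>C e)"
    using assms(3) unfolding cv.span_finite[OF assms(1)] by auto
  then have "cinner v e = u e" if "e \<in> E" for e
    using cinner_sum_orthonormal[OF assms(1,2) that] by simp
  with u show ?thesis
    by (auto intro: sum.cong)
qed

lemma orthonormal_parseval:
  assumes "finite E" "orthonormal E" "v \<in> cv.span E"
  shows "(hnorm v)\<^sup>2 = (\<Sum>e\<in>E. (cmod (cinner v e))\<^sup>2)"
proof -
  have "cinner v v = cinner v (\<Sum>e\<in>E. cinner v e *\<^sub>C e)"
    using orthonormal_expansion[OF assms] by simp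
  also have "\<dots> = (\<Sum>e\<in>E. complex_of_real ((cmod (cinner v e))\<^sup>2))"
    by (simp add: cinner_sum_right cinner_scaleC_right complex_norm_square mult.commute
        del: of_real_power)
  finally show ?thesis
    by (simp add: hnorm_sq Re_sum)
qed

lemma orthonormal_independent:
  assumes "orthonormal E"
  shows "\<not> cv.dependent E"
  unfolding cv.dependent_explicit
proof clarify
  fix T u v
  assume T: "finite T" "T \<subseteq> E" "(\<Sum>v\<in>T. u v *\<^sub>C v) = 0" "v \<in> T" "u v \<noteq> 0"
  have "cinner (\<Sum>v\<in>T. u v *\<^sub>C v) v = u v"
    using cinner_sum_orthonormal[OF T(1) orthonormal_subset[OF assms T(2)] T(4)] .
  with T show False
    by simp
qed

text \<open>The new vector is the normalised component of \<open>x\<close> orthogonal to \<open>E\<close>.\<close>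
lemma gram_schmidt_step:
  assumes "finite E" "orthonormal E" "x \<notin> cv.span E"
  obtains n where "n \<notin> E" "orthonormal (insert n E)"
    "cv.span (insert n E) = cv.span (insert x E)"
proof -
  define p where "p = (\<Sum>e\<in>E. cinner x e *\<^sub>C e)"
  define w where "w = x - p"
  define n where "n = complex_of_real (1 / hnorm w) *\<^sub>C w"
  have p: "p \<in> cv.span E"
    unfolding p_def by (intro cv.span_sum cv.span_scale cv.span_base)
  have "w \<noteq> 0"
    using assms(3) p unfolding w_def by auto
  then have nn: "cinner n n = 1"
    using hnorm_normalize[of w] by (simp add: n_def cinner_self_eq_hnorm_sq)
  have "cinner w e = 0" if "e \<in> E" for e
    using cinner_sum_orthonormal[OF assms(1,2) that] by (simp add: w_def p_def cinner_diff_left)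
  then have nE: "cinner n e = 0" "cinner e n = 0" if "e \<in> E" for e
    using that cinner_conj_sym[of e n] by (simp_all add: n_def cinner_scaleC_left)
  then have "n \<notin> E"
    using nn by force
  moreover have "orthonormal (insert n E)"
    using assms(2) nn nE \<open>n \<notin> E\<close> unfolding orthonormal_def by auto
  moreover have "cv.span (insert n E) = cv.span (insert x E)"
  proof (rule cv.span_eq[THEN iffD2], intro conjI)
    have "n \<in> cv.span (insert x E)"
      unfolding n_def w_def
      using p cv.span_mono[of E "insert x E"]
      by (blast intro: cv.span_scale cv.span_diff cv.span_base)
    then show "insert n E \<subseteq> cv.span (insert x E)"
      using cv.span_superset by blast
    have "x = complex_of_real (hnorm w) *\<^sub>C n + p"
      using hnorm_pos[OF \<open>w \<noteq> 0\<close>] by (simp add: n_def w_def)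
    then have "x \<in> cv.span (insert n E)"
      using p cv.span_mono[of E "insert n E"]
      by (metis cv.span_add cv.span_base cv.span_scale insertI1 subsetD subset_insertI)
    then show "insert x E \<subseteq> cv.span (insert n E)"
      using cv.span_superset by blast
  qed
  ultimately show ?thesis
    using that by blast
qed

lemma gram_schmidt:
  assumes "finite (F :: 'a::hermitian_space set)"
  obtains E where "finite E" "orthonormal E" "cv.span E = cv.span F" "card E \<le> card F"
  using assms
proof (induction F arbitrary: thesis rule: finite_induct)
  case empty
  then show ?case
    by (auto simp: orthonormal_def)
next
  case (insert x F)
  obtain E where E: "finite E" "orthonormal E" "cv.span E = cv.span F" "card E \<le> card F"
    using insert.IH by blast
  show ?case
  proof (cases "x \<in> cv.span E")
    case True
    then have "cv.span (insert x F) = cv.span E"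
      using E(3) cv.span_superset[of F] cv.span_mono[of F "insert x F"]
      unfolding cv.span_eq by blast
    with E insert show ?thesis
      by (metis card_insert_le le_trans)
  next
    case False
    then obtain n where "n \<notin> E" "orthonormal (insert n E)"
      "cv.span (insert n E) = cv.span (insert x E)"
      using gram_schmidt_step[OF E(1,2)] by blast
    moreover have "cv.span (insert x E) = cv.span (insert x F)"
      using E(3) by (simp add: cv.span_insert)
    ultimately show ?thesis
      using insert E by (intro insert.prems[of "insert n E"]) auto
  qed
qed

lemma corthonormal_basisD:
  assumes "corthonormal_basis E"
  shows "finite E" "orthonormal E" "cv.span E = UNIV" "cbasis E"
proof -
  show fin: "finite E" and orth: "orthonormal E" and span: "cv.span E = UNIV"
    using assms unfolding corthonormal_basis_def orthonormal_def cspan_eq_span by auto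
  show "cbasis E"
    unfolding cbasis_def cindependent_iff cspan_eq_span
    using fin orth span orthonormal_independent by blast
qed

lemma exists_corthonormal_basis:
  assumes "cfinite_dim (UNIV :: 'a::hermitian_space set)"
  shows "\<exists>E :: 'a set. corthonormal_basis E"
proof -
  obtain F :: "'a set" where "finite F" "UNIV \<subseteq> cspan F"
    using assms unfolding cfinite_dim_def by blast
  moreover obtain E where E: "finite E" "orthonormal E" "cv.span E = cv.span F"
    using gram_schmidt[OF \<open>finite F\<close>] by blast
  ultimately have "cv.span E = UNIV"
    by (auto simp: cspan_eq_span)
  with E show ?thesis
    unfolding corthonormal_basis_def orthonormal_def cspan_eq_span by blast
qed

lemma cbasisD:
  assumes "cbasis B"
  shows "finite B" "\<not> cv.dependent B" "cv.span B = UNIV"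
  using assms unfolding cbasis_def cindependent_iff cspan_eq_span by auto

lemma dual_elem_eq:
  assumes B: "cbasis B" and b: "b \<in> B" and x: "x = (\<Sum>v\<in>B. u v *\<^sub>C v)"
  shows "dual_elem B b x = u b"
proof -
  let ?P = "\<lambda>c. c \<in> B \<rightarrow>\<^sub>E UNIV \<and> x = (\<Sum>v\<in>B. c v *\<^sub>C v)"
  have "?P (restrict u B)"
    using x by (auto intro: sum.cong)
  moreover have "c = restrict u B" if "?P c" for c
  proof (rule PiE_ext)
    show "c \<in> B \<rightarrow>\<^sub>E UNIV" "restrict u B \<in> B \<rightarrow>\<^sub>E UNIV"
      using that by auto
    fix i
    assume i: "i \<in> B"
    have "(\<Sum>v\<in>B. (c v - u v) *\<^sub>C v) = 0"
      using that x by (simp add: cv.scale_left_diff_distrib sum_subtractf)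
    then have "c i - u i = 0"
      using cv.independentD[OF cbasisD(2)[OF B] cbasisD(1)[OF B] order_refl _ i, of "\<lambda>v. c v - u v"]
      by simp
    with i show "c i = restrict u B i"
      by simp
  qed
  ultimately have "(THE c. ?P c) = restrict u B"
    by (rule the_equality)
  with b show ?thesis
    unfolding dual_elem_def by simp
qed

lemma dual_elem_expansion:
  assumes B: "cbasis B"
  shows "x = (\<Sum>b\<in>B. dual_elem B b x *\<^sub>C b)"
proof -
  obtain u where u: "x = (\<Sum>v\<in>B. u v *\<^sub>C v)"
    using cbasisD(3)[OF B] unfolding cv.span_finite[OF cbasisD(1)[OF B]] by auto
  then have "dual_elem B b x = u b" if "b \<in> B" for b
    using dual_elem_eq[OF B that] by simp
  with u show ?thesis
    by (auto intro: sum.cong)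
qed

lemma cfunctional_dual_elem:
  assumes B: "cbasis B" and b: "b \<in> B"
  shows "cfunctional (dual_elem B b)"
  unfolding cfunctional_def
proof (intro conjI allI)
  fix x y
  have "x + y = (\<Sum>v\<in>B. (dual_elem B v x + dual_elem B v y) *\<^sub>C v)"
    by (subst (1 2) dual_elem_expansion[OF B]) (simp add: cv.scale_left_distrib sum.distrib)
  then show "dual_elem B b (x + y) = dual_elem B b x + dual_elem B b y"
    by (rule dual_elem_eq[OF B b])
next
  fix a x
  have "a *\<^sub>C x = (\<Sum>v\<in>B. (a * dual_elem B v x) *\<^sub>C v)"
    by (subst dual_elem_expansion[OF B]) (simp add: cv.scale_sum_right)
  then show "dual_elem B b (a *\<^sub>C x) = a * dual_elem B b x"
    by (rule dual_elem_eq[OF B b])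
qed

lemma clinear_zero: "clinear D \<Longrightarrow> D 0 = 0"
  unfolding clinear_def by (metis cv.scale_zero_left)

lemma clinear_scaleC: "clinear D \<Longrightarrow> D (a *\<^sub>C x) = a *\<^sub>C D x"
  unfolding clinear_def by blast

lemma clinear_sum: "clinear D \<Longrightarrow> D (\<Sum>i\<in>S. f i) = (\<Sum>i\<in>S. D (f i))"
  by (induction S rule: infinite_finite_induct) (auto simp: clinear_zero, simp add: clinear_def)

lemma cfunctional_zero: "cfunctional (\<lambda>x. 0)"
  unfolding cfunctional_def by simp

lemma cfunctional_zero_value: "cfunctional \<alpha> \<Longrightarrow> \<alpha> 0 = 0"
  unfolding cfunctional_def by (metis cv.scale_zero_left mult_zero_left)

lemma cfunctional_mult: "cfunctional \<alpha> \<Longrightarrow> cfunctional (\<lambda>x. c * \<alpha> x)"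
  unfolding cfunctional_def by (simp add: algebra_simps)

lemma cfunctional_add: "cfunctional \<alpha> \<Longrightarrow> cfunctional \<beta> \<Longrightarrow> cfunctional (\<lambda>x. \<alpha> x + \<beta> x)"
  unfolding cfunctional_def by (simp add: algebra_simps)

lemma cfunctional_sum:
  "(\<And>i. i \<in> S \<Longrightarrow> cfunctional (f i)) \<Longrightarrow> cfunctional (\<lambda>x. \<Sum>i\<in>S. f i x)"
  by (induction S rule: infinite_finite_induct) (auto simp: cfunctional_zero intro: cfunctional_add)

lemma cfunctional_cinner: "clinear D \<Longrightarrow> cfunctional (\<lambda>x. cinner (D x) e)"
  unfolding cfunctional_def clinear_def by (simp add: cinner_add_left cinner_scaleC_left)

lemma cfunctional_sum_scaleC:
  assumes "cfunctional \<alpha>"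
  shows "\<alpha> (\<Sum>i\<in>S. c i *\<^sub>C v i) = (\<Sum>i\<in>S. c i * \<alpha> (v i))"
  using assms cfunctional_zero_value[OF assms] unfolding cfunctional_def
  by (induction S rule: infinite_finite_induct) auto

lemma cfunctional_expansion:
  assumes "cbasis B" "cfunctional \<alpha>"
  shows "(\<Sum>b\<in>B. \<alpha> b * dual_elem B b x) = \<alpha> x"
proof -
  have "\<alpha> (\<Sum>b\<in>B. dual_elem B b x *\<^sub>C b) = (\<Sum>b\<in>B. \<alpha> b * dual_elem B b x)"
    by (simp add: cfunctional_sum_scaleC[OF assms(2)] mult.commute)
  then show ?thesis
    by (simp only: dual_elem_expansion[OF assms(1), symmetric])
qed

lemma dual_norm_mult: "dual_norm (\<lambda>x. c * \<alpha> x) = ennreal (cmod c) * dual_norm \<alpha>"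
  unfolding dual_norm_def SUP_mult_left_ennreal
  by (simp add: norm_mult ennreal_mult)

lemma cfunctional_dual_norm_eq_0:
  assumes \<alpha>: "cfunctional \<alpha>" and 0: "dual_norm \<alpha> = 0"
  shows "\<alpha> x = 0"
proof (cases "x = 0")
  case True
  then show ?thesis
    using cfunctional_zero_value[OF \<alpha>] by simp
next
  case False
  define u where "u = complex_of_real (1 / hnorm x) *\<^sub>C x"
  have "ennreal (cmod (\<alpha> u)) \<le> dual_norm \<alpha>"
    unfolding dual_norm_def u_def using hnorm_normalize[OF False] by (intro SUP_upper) auto
  with 0 have "\<alpha> u = 0"
    by simp
  moreover have "x = complex_of_real (hnorm x) *\<^sub>C u"
    using hnorm_pos[OF False] by (simp add: u_def)
  ultimately show ?thesis
    using \<alpha> unfolding cfunctional_def by (metis mult_zero_right)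
qed

text \<open>Cauchy--Schwarz in the coordinates of a unit vector with respect to \<open>Q\<close>.\<close>
lemma dual_norm_cinner_le:
  fixes D :: "'u::hermitian_space \<Rightarrow> 'v::hermitian_space"
  assumes Q: "corthonormal_basis Q" and D: "clinear D"
  shows "dual_norm (\<lambda>x. cinner (D x) e) \<le> ennreal (L2_set (\<lambda>q. cmod (cinner (D q) e)) Q)"
  unfolding dual_norm_def
proof (rule SUP_least)
  fix u :: 'u
  assume "u \<in> {u. hnorm u = 1}"
  then have norm_u: "L2_set (\<lambda>q. cmod (cinner u q)) Q = 1"
    using orthonormal_parseval[OF corthonormal_basisD(1,2)[OF Q], of u] corthonormal_basisD(3)[OF Q]
    by (simp add: L2_set_def)
  have u_exp: "(\<Sum>q\<in>Q. cinner u q *\<^sub>C q) = u"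
    using orthonormal_expansion[OF corthonormal_basisD(1,2)[OF Q]] corthonormal_basisD(3)[OF Q]
    by simp
  have "cinner (D u) e = (\<Sum>q\<in>Q. cinner u q * cinner (D q) e)"
    using cfunctional_sum_scaleC[OF cfunctional_cinner[OF D], of "\<lambda>q. cinner u q" "\<lambda>q. q" Q]
    unfolding u_exp .
  then have "cmod (cinner (D u) e) \<le> (\<Sum>q\<in>Q. \<bar>cmod (cinner u q)\<bar> * \<bar>cmod (cinner (D q) e)\<bar>)"
    by (auto intro: order_trans[OF norm_sum] simp: norm_mult)
  then show "ennreal (cmod (cinner (D u) e)) \<le> ennreal (L2_set (\<lambda>q. cmod (cinner (D q) e)) Q)"
    using L2_set_mult_ineq[where f = "\<lambda>q. cmod (cinner u q)" and g = "\<lambda>q. cmod (cinner (D q) e)"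
        and A = Q] norm_u
    by (intro ennreal_leI) (simp; linarith)
qed

context
  fixes \<rho> :: "'v::complex_vector \<Rightarrow> ('u::complex_vector \<Rightarrow> complex) \<Rightarrow> 'w::complex_vector"
  assumes bil: "cbilinear \<rho>"
begin

lemma cbilinear_sum_left:
  assumes "cfunctional \<alpha>"
  shows "\<rho> (\<Sum>i\<in>S. c i *\<^sub>C v i) \<alpha> = (\<Sum>i\<in>S. c i *\<^sub>C \<rho> (v i) \<alpha>)"
proof -
  have lin: "clinear (\<lambda>v. \<rho> v \<alpha>)"
    using bil assms unfolding cbilinear_def by blast
  show ?thesis
    using clinear_sum[OF lin, of "\<lambda>i. c i *\<^sub>C v i" S] clinear_scaleC[OF lin] by simp
qed

lemma cbilinear_mult_right: "cfunctional \<alpha> \<Longrightarrow> \<rho> v (\<lambda>x. a * \<alpha> x) = a *\<^sub>C \<rho> v \<alpha>"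
  using bil unfolding cbilinear_def by blast

lemma cbilinear_zero_right: "\<rho> v (\<lambda>x. 0) = 0"
  using cbilinear_mult_right[OF cfunctional_zero, of v 0] by simp

lemma cbilinear_sum_right:
  "(\<And>i. i \<in> S \<Longrightarrow> cfunctional (f i)) \<Longrightarrow> \<rho> v (\<lambda>x. \<Sum>i\<in>S. f i x) = (\<Sum>i\<in>S. \<rho> v (f i))"
proof (induction S rule: infinite_finite_induct)
  case (insert i S)
  then have "\<rho> v (\<lambda>x. f i x + (\<Sum>j\<in>S. f j x)) = \<rho> v (f i) + \<rho> v (\<lambda>x. \<Sum>j\<in>S. f j x)"
    using bil cfunctional_sum[of S f] unfolding cbilinear_def by auto
  with insert show ?case
    by simp
qed (simp_all add: cbilinear_zero_right)

end

lemma hnorm_cbilinear_le: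
  assumes bil: "cbilinear \<rho>" and v: "hnorm v = 1" and \<alpha>: "cfunctional \<alpha>"
    and finite: "dual_norm \<alpha> \<noteq> \<infinity>"
  shows "ennreal (hnorm (\<rho> v \<alpha>)) \<le> rho_norm \<rho> * dual_norm \<alpha>"
proof -
  obtain d where d: "dual_norm \<alpha> = ennreal d" "d \<ge> 0"
    using finite by (cases "dual_norm \<alpha>") auto
  show ?thesis
  proof (cases "d = 0")
    case True
    then have "\<alpha> = (\<lambda>x. 0)"
      using cfunctional_dual_norm_eq_0[OF \<alpha>] d by auto
    then show ?thesis
      by (simp add: cbilinear_zero_right[OF bil])
  next
    case False
    \<comment> \<open>Normalise \<open>\<alpha>\<close> to a functional of dual norm \<open>1\<close>, which enters the supremum \<open>rho_norm \<rho>\<close>.\<close>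
    define \<beta> where "\<beta> x = complex_of_real (1 / d) * \<alpha> x" for x
    have \<beta>: "cfunctional \<beta>"
      unfolding \<beta>_def by (rule cfunctional_mult[OF \<alpha>])
    have "dual_norm \<beta> = 1"
      using d False unfolding \<beta>_def dual_norm_mult by (simp add: ennreal_mult[symmetric] norm_divide)
    with v \<beta> have "ennreal (hnorm (\<rho> v \<beta>)) \<le> rho_norm \<rho>"
      unfolding rho_norm_def by (intro SUP_upper2[of "(v, \<beta>)"]) auto
    moreover have "\<rho> v \<alpha> = complex_of_real d *\<^sub>C \<rho> v \<beta>"
    proof -
      have "\<alpha> = (\<lambda>x. complex_of_real d * \<beta> x)"
        using False by (simp add: \<beta>_def)
      then show ?thesis
        by (simp add: cbilinear_mult_right[OF bil \<beta>])
    qed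
    then have "ennreal (hnorm (\<rho> v \<alpha>)) = ennreal d * ennreal (hnorm (\<rho> v \<beta>))"
      using d(2) by (simp add: hnorm_scaleC ennreal_mult hnorm_nonneg)
    ultimately show ?thesis
      using d(1) by (metis mult.commute mult_left_mono zero_le)
  qed
qed

lemma clinear_span_image:
  assumes "clinear D" "finite F"
  shows "D ` cv.span F \<subseteq> cv.span (D ` F)"
proof clarify
  fix x
  assume "x \<in> cv.span F"
  then obtain c where "x = (\<Sum>v\<in>F. c v *\<^sub>C v)"
    unfolding cv.span_finite[OF assms(2)] by auto
  then have "D x = (\<Sum>v\<in>F. c v *\<^sub>C D v)"
    by (simp add: clinear_sum[OF assms(1)] clinear_scaleC[OF assms(1)])
  then show "D x \<in> cv.span (D ` F)"
    by (simp add: cv.span_sum cv.span_scale cv.span_base)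
qed

lemma exists_orthonormal_range:
  fixes D :: "'u::hermitian_space \<Rightarrow> 'v::hermitian_space"
  assumes "cfinite_dim (UNIV :: 'u set)" "clinear D"
  obtains E where "finite E" "orthonormal E" "range D \<subseteq> cv.span E" "card E \<le> crank D"
proof -
  obtain G :: "'u set" where "finite G" "UNIV \<subseteq> cv.span G"
    using assms(1) unfolding cfinite_dim_def cspan_eq_span by blast
  then have "range D \<subseteq> cv.span (D ` G)"
    using clinear_span_image[OF assms(2)] by blast
  with \<open>finite G\<close> have "\<exists>n F. finite F \<and> card F = n \<and> range D \<subseteq> cspan F"
    by (auto simp: cspan_eq_span)
  then have "\<exists>F. finite F \<and> card F = crank D \<and> range D \<subseteq> cspan F"
    unfolding crank_def cdim_def by (rule LeastI_ex)
  then obtain F where F: "finite F" "card F = crank D" "range D \<subseteq> cv.span F"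
    by (auto simp: cspan_eq_span)
  obtain E where "finite E" "orthonormal E" "cv.span E = cv.span F" "card E \<le> card F"
    using gram_schmidt[OF F(1)] by blast
  with F that show ?thesis
    by simp
qed

text \<open>The trace computed in an orthonormal basis \<open>E\<close> of the range of \<open>D\<close>, instead of the
  arbitrary basis \<open>B\<close> of \<open>U\<close> chosen by \<open>rho_trace\<close>.\<close>
lemma rho_trace_orthonormal:
  fixes D :: "'u::hermitian_space \<Rightarrow> 'v::hermitian_space"
  assumes "cfinite_dim (UNIV :: 'u set)" "clinear D" "cbilinear \<rho>"
    and E: "finite E" "orthonormal E" "range D \<subseteq> cv.span E"
  shows "rho_trace \<rho> D = (\<Sum>e\<in>E. \<rho> e (\<lambda>x. cinner (D x) e))"
proof -
  define B where "B = (SOME B :: 'u set. cbasis B)"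
  have B: "cbasis B"
    using exists_corthonormal_basis[OF assms(1)] corthonormal_basisD(4) unfolding B_def
    by (metis someI)
  have dual: "cfunctional (dual_elem B b)" if "b \<in> B" for b
    using cfunctional_dual_elem[OF B that] .
  have "rho_trace \<rho> D = (\<Sum>b\<in>B. \<rho> (D b) (dual_elem B b))"
    unfolding rho_trace_def Let_def B_def ..
  also have "\<dots> = (\<Sum>b\<in>B. \<Sum>e\<in>E. \<rho> e (\<lambda>x. cinner (D b) e * dual_elem B b x))"
  proof (intro sum.cong refl)
    fix b
    assume "b \<in> B"
    have "D b = (\<Sum>e\<in>E. cinner (D b) e *\<^sub>C e)"
      using E(3) by (intro orthonormal_expansion[OF E(1,2)]) auto
    then have "\<rho> (D b) (dual_elem B b) = \<rho> (\<Sum>e\<in>E. cinner (D b) e *\<^sub>C e) (dual_elem B b)"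
      by (rule arg_cong[where f = "\<lambda>x. \<rho> x (dual_elem B b)"])
    then show "\<rho> (D b) (dual_elem B b) = (\<Sum>e\<in>E. \<rho> e (\<lambda>x. cinner (D b) e * dual_elem B b x))"
      by (simp add: cbilinear_sum_left[OF assms(3) dual[OF \<open>b \<in> B\<close>]]
          cbilinear_mult_right[OF assms(3) dual[OF \<open>b \<in> B\<close>]])
  qed
  also have "\<dots> = (\<Sum>e\<in>E. \<rho> e (\<lambda>x. \<Sum>b\<in>B. cinner (D b) e * dual_elem B b x))"
    by (subst sum.swap) (simp add: cbilinear_sum_right[OF assms(3)] cfunctional_mult dual)
  also have "\<dots> = (\<Sum>e\<in>E. \<rho> e (\<lambda>x. cinner (D x) e))"
    by (simp add: cfunctional_expansion[OF B cfunctional_cinner[OF assms(2)]])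
  finally show ?thesis .
qed

text \<open>Parseval in both factors: the Hilbert--Schmidt norm is the \<open>\<ell>\<^sup>2\<close>-norm of the matrix
  \<open>\<langle>D q, e\<rangle>\<close>, computed either by columns \<open>q\<close> or by rows \<open>e\<close>.\<close>
lemma L2_set_hnorm_orthonormal_coords:
  assumes "finite E" "orthonormal E" "range D \<subseteq> cv.span E"
  shows "L2_set (\<lambda>q. hnorm (D q)) Q = L2_set (\<lambda>e. L2_set (\<lambda>q. cmod (cinner (D q) e)) Q) E"
proof -
  have "(\<Sum>q\<in>Q. (hnorm (D q))\<^sup>2) = (\<Sum>q\<in>Q. \<Sum>e\<in>E. (cmod (cinner (D q) e))\<^sup>2)"
    using assms(3) by (intro sum.cong refl orthonormal_parseval[OF assms(1,2)]) auto
  also have "\<dots> = (\<Sum>e\<in>E. (L2_set (\<lambda>q. cmod (cinner (D q) e)) Q)\<^sup>2)"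
    by (subst sum.swap) (simp add: L2_set_def sum_nonneg)
  finally show ?thesis
    unfolding L2_set_def by simp
qed

lemma sum_le_sqrt_card_L2_set: "(\<Sum>i\<in>A. \<bar>f i\<bar>) \<le> sqrt (real (card A)) * L2_set f A"
  using L2_set_mult_ineq[where f = "\<lambda>_. 1" and g = f and A = A] by (simp add: L2_set_constant)

lemma hnorm_cbilinear_cinner_le:
  assumes "cbilinear \<rho>" "corthonormal_basis Q" "clinear D" "hnorm e = 1"
  shows "ennreal (hnorm (\<rho> e (\<lambda>x. cinner (D x) e)))
           \<le> rho_norm \<rho> * ennreal (L2_set (\<lambda>q. cmod (cinner (D q) e)) Q)"
proof -
  have dual_le: "dual_norm (\<lambda>x. cinner (D x) e) \<le> ennreal (L2_set (\<lambda>q. cmod (cinner (D q) e)) Q)"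
    by (rule dual_norm_cinner_le[OF assms(2,3)])
  then have "ennreal (hnorm (\<rho> e (\<lambda>x. cinner (D x) e)))
      \<le> rho_norm \<rho> * dual_norm (\<lambda>x. cinner (D x) e)"
    by (intro hnorm_cbilinear_le[OF assms(1,4) cfunctional_cinner[OF assms(3)]])
      (auto simp: top_unique)
  also have "\<dots> \<le> rho_norm \<rho> * ennreal (L2_set (\<lambda>q. cmod (cinner (D q) e)) Q)"
    using dual_le by (rule mult_left_mono) simp
  finally show ?thesis .
qed

lemma hs_norm_corthonormal_basis:
  fixes D :: "'u::hermitian_space \<Rightarrow> 'v::hermitian_space"
  assumes "cfinite_dim (UNIV :: 'u set)"
  obtains Q where "corthonormal_basis Q" "hs_norm D = L2_set (\<lambda>q. hnorm (D q)) Q"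
proof
  show "corthonormal_basis (SOME Q :: 'u set. corthonormal_basis Q)"
    using exists_corthonormal_basis[OF assms] by (rule someI_ex)
  show "hs_norm D = L2_set (\<lambda>q. hnorm (D q)) (SOME Q. corthonormal_basis Q)"
    unfolding hs_norm_def Let_def L2_set_def ..
qed

theorem lemma2p2:
  fixes D :: "'u::hermitian_space \<Rightarrow> 'v::hermitian_space"
    and \<rho> :: "'v \<Rightarrow> ('u \<Rightarrow> complex) \<Rightarrow> 'w::hermitian_space"
  assumes "cfinite_dim (UNIV :: 'u set)"
    and "clinear D"
    and "cbilinear \<rho>"
  shows "ennreal (hnorm (rho_trace \<rho> D))
           \<le> ennreal (sqrt (real (crank D))) * rho_norm \<rho> * ennreal (hs_norm D)"
proof -
  obtain Q where Q: "corthonormal_basis Q" "hs_norm D = L2_set (\<lambda>q. hnorm (D q)) Q"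
    using hs_norm_corthonormal_basis[OF assms(1)] .
  obtain E where E: "finite E" "orthonormal E" "range D \<subseteq> cv.span E" "card E \<le> crank D"
    using exists_orthonormal_range[OF assms(1,2)] .
  define s where "s e = L2_set (\<lambda>q. cmod (cinner (D q) e)) Q" for e
  have hs_norm: "hs_norm D = L2_set s E"
    unfolding Q(2) s_def by (rule L2_set_hnorm_orthonormal_coords[OF E(1-3)])
  have "(\<Sum>e\<in>E. s e) \<le> sqrt (real (card E)) * hs_norm D"
    using sum_le_sqrt_card_L2_set[of s E] by (simp add: s_def hs_norm)
  also have "\<dots> \<le> sqrt (real (crank D)) * hs_norm D"
    using E(4) by (intro mult_right_mono) (auto simp: hs_norm)
  finally have sum_s: "(\<Sum>e\<in>E. s e) \<le> sqrt (real (crank D)) * hs_norm D" .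
  have "ennreal (hnorm (rho_trace \<rho> D)) \<le> ennreal (\<Sum>e\<in>E. hnorm (\<rho> e (\<lambda>x. cinner (D x) e)))"
    unfolding rho_trace_orthonormal[OF assms E(1-3)] by (intro ennreal_leI hnorm_sum_le)
  also have "\<dots> = (\<Sum>e\<in>E. ennreal (hnorm (\<rho> e (\<lambda>x. cinner (D x) e))))"
    by (simp add: hnorm_nonneg)
  also have "\<dots> \<le> (\<Sum>e\<in>E. rho_norm \<rho> * ennreal (s e))"
    unfolding s_def using hnorm_cbilinear_cinner_le[OF assms(3) Q(1) assms(2)]
    by (intro sum_mono) (simp add: orthonormal_hnorm[OF E(2)])
  also have "\<dots> = rho_norm \<rho> * ennreal (\<Sum>e\<in>E. s e)"
    by (simp add: s_def flip: sum_distrib_left)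
  also have "\<dots> \<le> rho_norm \<rho> * ennreal (sqrt (real (crank D)) * hs_norm D)"
    using sum_s by (intro mult_left_mono ennreal_leI) auto
  finally show ?thesis
    by (simp add: ennreal_mult hs_norm mult_ac)
qed

end
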